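(* Let $X$ be a real Hilbert space, let $\lambda>0$, and let $f\colon X\to\mathbb R$ be Fréchet differentiable with $\nabla f$ Lipschitz continuous with constant $1/\lambda$ (and, as standing assumption, $f(x)\ge-\alpha\|x\|^2-\beta\|x\|+\nu$ for all $x$ for some $\nu,\beta\in\mathbb R$, $\alpha\ge0$). Then: (i) $\mathrm{Id}+\lambda\nabla f$ is maximally monotone; (ii) $f$ is $\tfrac1\lambda$-hypoconvex; (iii) $f+\tfrac{1}{2\lambda}\|\cdot\|^2$ is convex; (iv) for every $\mu\in]0,\lambda[$, $\operatorname{Prox}_{\mu f}$ is single-valued; (v) for every $\mu\in]0,\lambda[$, $\operatorname{Prox}_{\mu f}$ is $\tfrac{\lambda-\mu}{\lambda}$-cocoercive; (vi) for every $\mu\in]0,\lambda[$, $\operatorname{Prox}_{\mu f}=J_{\mu\hat\partial f}=(\mathrm{Id}+\mu\nabla f)^{-1}$; (vii) for every $\mu\in]0,\lambda[$, $\mathrm{Id}-\operatorname{Prox}_{\mu f}$ is $\tfrac{\lambda}{2(\lambda-\mu)}$-conically nonexpansive.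
   Context: $\operatorname{Prox}_{\mu f}(x)=\operatorname{argmin}_{y\in X}\big(f(y)+\tfrac{1}{2\mu}\|x-y\|^2\big)$; $J_B=(\mathrm{Id}+B)^{-1}$. $\hat\partial$ denotes any abstract subdifferential, i.e., a rule satisfying: equals the convex subdifferential on proper lsc convex functions; equals $\nabla g$ for continuously differentiable $g$; $0\in\hat\partial g(x)$ at local minimizers $x$; $\hat\partial(g+\beta\|\cdot-x\|^2/2)=\hat\partial g+\beta(\mathrm{Id}-x)$ for all $\beta\in\mathbb R$ (so here $\hat\partial f=\nabla f$). $f$ is $\tfrac1\lambda$-hypoconvex if $f((1-\tau)x+\tau y)\le(1-\tau)f(x)+\tau f(y)+\tfrac{1}{2\lambda}\tau(1-\tau)\|x-y\|^2$ for all $x,y$, $\tau\in]0,1[$. $S$ is $\gamma$-cocoercive if $\langle x-y,Sx-Sy\rangle\ge\gamma\|Sx-Sy\|^2$ for all $x,y$. $T$ is $\alpha$-conically nonexpansive ($\alpha>0$) if $T=(1-\alpha)\mathrm{Id}+\alpha N$ for some nonexpansive $N\colon X\to X$. *)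

theory Defs
  imports "HOL-Analysis.Analysis"
begin

definition Prox :: "real \<Rightarrow> ('a::real_normed_vector \<Rightarrow> real) \<Rightarrow> 'a \<Rightarrow> 'a set" where
  "Prox mu f x = {y. \<forall>z. f y + (norm (x - y))\<^sup>2 / (2 * mu) \<le> f z + (norm (x - z))\<^sup>2 / (2 * mu)}"

text \<open>The proximal map as a function (meaningful when Prox is single-valued).\<close>
definition prox_fun :: "real \<Rightarrow> ('a::real_normed_vector \<Rightarrow> real) \<Rightarrow> 'a \<Rightarrow> 'a" where
  "prox_fun mu f x = (THE y. y \<in> Prox mu f x)"

text \<open>Resolvent J_B = (Id + B)^{-1} of a set-valued operator B.\<close>
definition resolvent :: "('a::real_vector \<Rightarrow> 'a set) \<Rightarrow> 'a \<Rightarrow> 'a set" where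
  "resolvent B x = {y. \<exists>u \<in> B y. x = y + u}"

definition monotone_op :: "('a::real_inner \<Rightarrow> 'a set) \<Rightarrow> bool" where
  "monotone_op A \<longleftrightarrow> (\<forall>x y u v. u \<in> A x \<longrightarrow> v \<in> A y \<longrightarrow> 0 \<le> inner (x - y) (u - v))"

definition maximally_monotone :: "('a::real_inner \<Rightarrow> 'a set) \<Rightarrow> bool" where
  "maximally_monotone A \<longleftrightarrow> monotone_op A \<and>
     (\<forall>x u. (\<forall>y v. v \<in> A y \<longrightarrow> 0 \<le> inner (x - y) (u - v)) \<longrightarrow> u \<in> A x)"

definition hypoconvex :: "real \<Rightarrow> ('a::real_normed_vector \<Rightarrow> real) \<Rightarrow> bool" where
  "hypoconvex c f \<longleftrightarrow> (\<forall>x y \<tau>. 0 < \<tau> \<and> \<tau> < 1 \<longrightarrow>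
     f ((1 - \<tau>) *\<^sub>R x + \<tau> *\<^sub>R y) \<le> (1 - \<tau>) * f x + \<tau> * f y + (c / 2) * \<tau> * (1 - \<tau>) * (norm (x - y))\<^sup>2)"

definition cocoercive :: "real \<Rightarrow> ('a::real_inner \<Rightarrow> 'a) \<Rightarrow> bool" where
  "cocoercive \<gamma> S \<longleftrightarrow> (\<forall>x y. \<gamma> * (norm (S x - S y))\<^sup>2 \<le> inner (x - y) (S x - S y))"

definition nonexpansive :: "('a::real_normed_vector \<Rightarrow> 'a) \<Rightarrow> bool" where
  "nonexpansive N \<longleftrightarrow> (\<forall>x y. norm (N x - N y) \<le> norm (x - y))"

definition conically_nonexpansive :: "real \<Rightarrow> ('a::real_normed_vector \<Rightarrow> 'a) \<Rightarrow> bool" where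
  "conically_nonexpansive \<alpha> T \<longleftrightarrow> 0 < \<alpha> \<and>
     (\<exists>N. nonexpansive N \<and> (\<forall>x. T x = (1 - \<alpha>) *\<^sub>R x + \<alpha> *\<^sub>R N x))"

end

theory Submission
  imports Defs
begin

text \<open>A \<open>1/\<lambda>\<close>-Lipschitz gradient is hypomonotone with constant \<open>1/\<lambda>\<close>:
  \<open>\<langle>x - y, \<nabla>f x - \<nabla>f y\<rangle> \<ge> -\<parallel>x - y\<parallel>\<^sup>2/\<lambda>\<close>. Hence the gradient of
  \<open>f + \<parallel>\<cdot>\<parallel>\<^sup>2/(2\<lambda>)\<close> is monotone, which gives convexity (and so hypoconvexity)
  and, with the Lipschitz bound, maximal monotonicity of \<open>Id + \<lambda>\<nabla>f\<close>. For
  \<open>\<mu> < \<lambda>\<close> the objective defining \<open>Prox\<^sub>\<mu>\<^sub>f x\<close> also has monotone gradient, so its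
  minimizers are exactly the solutions of \<open>y + \<mu>\<nabla>f y = x\<close>; these exist uniquely
  because \<open>y \<mapsto> x - \<mu>\<nabla>f y\<close> is a \<open>\<mu>/\<lambda>\<close>-contraction.\<close>

definition hypomonotone :: "real \<Rightarrow> ('a::real_inner \<Rightarrow> 'a) \<Rightarrow> bool" where
  "hypomonotone c g \<longleftrightarrow> (\<forall>x y. - c * (norm (x - y))\<^sup>2 \<le> inner (x - y) (g x - g y))"

lemma lipschitz_on_imp_hypomonotone:
  fixes g :: "'a::real_inner \<Rightarrow> 'a"
  assumes "lipschitz_on L UNIV g"
  shows "hypomonotone L g"
  unfolding hypomonotone_def
proof (intro allI)
  fix x y
  have "- inner (x - y) (g x - g y) \<le> norm (x - y) * norm (g x - g y)"
    using norm_cauchy_schwarz[of "x - y" "g y - g x"]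
    by (simp add: norm_minus_commute inner_diff_right)
  also have "\<dots> \<le> norm (x - y) * (L * norm (x - y))"
    using lipschitz_on_normD[OF assms] by (simp add: mult_left_mono)
  finally show "- L * (norm (x - y))\<^sup>2 \<le> inner (x - y) (g x - g y)"
    by (simp add: power2_eq_square algebra_simps)
qed

lemma hypomonotone_mono:
  assumes "hypomonotone c g" "c \<le> d"
  shows "hypomonotone d g"
  using assms unfolding hypomonotone_def
  by (smt (verit) mult_right_mono zero_le_power2)

lemma hypomonotone_imp_monotone_shift:
  assumes "hypomonotone c g"
  shows "0 \<le> inner (x - y) (g x - g y + c *\<^sub>R (x - y))"
proof -
  have "- c * (norm (x - y))\<^sup>2 \<le> inner (x - y) (g x - g y)"
    using assms unfolding hypomonotone_def by blast
  then show ?thesis by (simp add: inner_add_right power2_norm_eq_inner)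
qed

lemma has_real_derivative_along_line:
  fixes F :: "'a::real_inner \<Rightarrow> real"
  assumes "\<And>x. (F has_derivative (\<lambda>h. inner (G x) h)) (at x)"
  shows "((\<lambda>t. F (y + t *\<^sub>R d)) has_real_derivative inner (G (y + t *\<^sub>R d)) d) (at t)"
proof -
  have "((\<lambda>t. y + t *\<^sub>R d) has_derivative (\<lambda>s. s *\<^sub>R d)) (at t)"
    by (auto intro!: derivative_eq_intros)
  from has_derivative_compose[OF this assms[of "y + t *\<^sub>R d"]]
  have "((\<lambda>t. F (y + t *\<^sub>R d)) has_derivative (\<lambda>s. s * inner (G (y + t *\<^sub>R d)) d)) (at t)"
    by (simp add: o_def)
  then show ?thesis
    by (simp add: has_real_derivative_iff_has_vector_derivative has_vector_derivative_def mult.commute)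
qed

lemma monotone_gradient_imp_above_tangent:
  fixes F :: "'a::real_inner \<Rightarrow> real"
  assumes der: "\<And>x. (F has_derivative (\<lambda>h. inner (G x) h)) (at x)"
    and mono: "\<And>x y. 0 \<le> inner (x - y) (G x - G y)"
  shows "F y + inner (G y) (z - y) \<le> F z"
proof -
  define d where "d = z - y"
  define \<phi> where "\<phi> t = F (y + t *\<^sub>R d) - t * inner (G y) d" for t
  have "\<phi> 0 \<le> \<phi> 1"
  proof (rule DERIV_nonneg_imp_nondecreasing[of 0 1])
    fix t :: real assume t: "0 \<le> t" "t \<le> 1"
    have "(\<phi> has_real_derivative (inner (G (y + t *\<^sub>R d)) d - inner (G y) d)) (at t)"
      unfolding \<phi>_def by (auto intro!: derivative_eq_intros has_real_derivative_along_line[OF der])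
    moreover have "0 \<le> inner (G (y + t *\<^sub>R d)) d - inner (G y) d"
    proof (cases "t = 0")
      case False
      have "0 \<le> inner ((y + t *\<^sub>R d) - y) (G (y + t *\<^sub>R d) - G y)" by (rule mono)
      also have "\<dots> = t * (inner (G (y + t *\<^sub>R d)) d - inner (G y) d)"
        by (simp add: inner_commute algebra_simps)
      finally show ?thesis using False t by (simp add: zero_le_mult_iff)
    qed simp
    ultimately show "\<exists>D. (\<phi> has_real_derivative D) (at t) \<and> 0 \<le> D" by blast
  qed simp
  then show ?thesis by (simp add: \<phi>_def d_def)
qed

lemma monotone_gradient_imp_convex_on:
  fixes F :: "'a::real_inner \<Rightarrow> real"
  assumes der: "\<And>x. (F has_derivative (\<lambda>h. inner (G x) h)) (at x)"
    and mono: "\<And>x y. 0 \<le> inner (x - y) (G x - G y)"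
  shows "convex_on UNIV F"
proof (rule convex_onI)
  fix t :: real and x y :: 'a assume t: "0 < t" "t < 1"
  define w where "w = (1 - t) *\<^sub>R x + t *\<^sub>R y"
  note tangent = monotone_gradient_imp_above_tangent[OF der mono, of w]
  have "(1 - t) * inner (G w) (x - w) + t * inner (G w) (y - w)
      = inner (G w) ((1 - t) *\<^sub>R (x - w) + t *\<^sub>R (y - w))"
    by (simp add: inner_add_right)
  also have "(1 - t) *\<^sub>R (x - w) + t *\<^sub>R (y - w) = 0"
    by (simp add: w_def algebra_simps)
  finally have "(1 - t) * inner (G w) (x - w) + t * inner (G w) (y - w) = 0" by simp
  moreover have "(1 - t) * (F w + inner (G w) (x - w)) + t * (F w + inner (G w) (y - w))
      \<le> (1 - t) * F x + t * F y"
    using tangent[of x] tangent[of y] t by (intro add_mono mult_left_mono) auto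
  ultimately show "F ((1 - t) *\<^sub>R x + t *\<^sub>R y) \<le> (1 - t) * F x + t * F y"
    unfolding w_def[symmetric] by (simp add: algebra_simps)
qed simp

lemma has_derivative_norm_diff_power2:
  fixes x :: "'a::real_inner"
  shows "((\<lambda>y. (norm (y - x))\<^sup>2) has_derivative (\<lambda>h. inner (2 *\<^sub>R (y - x)) h)) (at y)"
  unfolding power2_norm_eq_inner
  by (auto intro!: derivative_eq_intros simp: inner_commute algebra_simps)

lemma hypomonotone_gradient_imp_convex_on:
  fixes f :: "'a::real_inner \<Rightarrow> real"
  assumes grad: "\<And>x. (f has_derivative (\<lambda>h. inner (g x) h)) (at x)"
    and "hypomonotone c g"
  shows "convex_on UNIV (\<lambda>x. f x + c / 2 * (norm x)\<^sup>2)"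
proof (rule monotone_gradient_imp_convex_on)
  fix x
  show "((\<lambda>x. f x + c / 2 * (norm x)\<^sup>2) has_derivative (\<lambda>h. inner (g x + c *\<^sub>R x) h)) (at x)"
    using has_derivative_add[OF grad has_derivative_mult_right[OF has_derivative_norm_diff_power2[of 0 x]], of "c / 2"]
    by (simp add: inner_add_left)
next
  fix x y
  show "0 \<le> inner (x - y) (g x + c *\<^sub>R x - (g y + c *\<^sub>R y))"
    using hypomonotone_imp_monotone_shift[OF \<open>hypomonotone c g\<close>, of x y]
    by (simp add: algebra_simps)
qed

lemma convex_on_add_norm_power2_imp_hypoconvex:
  fixes f :: "'a::real_inner \<Rightarrow> real"
  assumes "convex_on UNIV (\<lambda>x. f x + c / 2 * (norm x)\<^sup>2)"
  shows "hypoconvex c f"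
  unfolding hypoconvex_def
proof (intro allI impI)
  fix x y :: 'a and \<tau> :: real assume \<tau>: "0 < \<tau> \<and> \<tau> < 1"
  define w where "w = (1 - \<tau>) *\<^sub>R x + \<tau> *\<^sub>R y"
  have "f w + c / 2 * (norm w)\<^sup>2
      \<le> (1 - \<tau>) * (f x + c / 2 * (norm x)\<^sup>2) + \<tau> * (f y + c / 2 * (norm y)\<^sup>2)"
    unfolding w_def using \<tau> by (intro convex_onD[OF assms]) auto
  then have "f w \<le> (1 - \<tau>) * f x + \<tau> * f y
      + c / 2 * ((1 - \<tau>) * (norm x)\<^sup>2 + \<tau> * (norm y)\<^sup>2 - (norm w)\<^sup>2)"
    by (simp add: algebra_simps diff_divide_distrib)
  also have "(1 - \<tau>) * (norm x)\<^sup>2 + \<tau> * (norm y)\<^sup>2 - (norm w)\<^sup>2 = \<tau> * (1 - \<tau>) * (norm (x - y))\<^sup>2"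
    unfolding w_def power2_norm_eq_inner
    by (simp add: inner_commute[of y x] algebra_simps)
  finally show "f w \<le> (1 - \<tau>) * f x + \<tau> * f y + c / 2 * \<tau> * (1 - \<tau>) * (norm (x - y))\<^sup>2"
    by (simp add: mult.assoc)
qed

lemma monotone_lipschitz_imp_maximally_monotone:
  fixes A :: "'a::real_inner \<Rightarrow> 'a"
  assumes mono: "\<And>x y. 0 \<le> inner (x - y) (A x - A y)"
    and lip: "lipschitz_on L UNIV A"
  shows "maximally_monotone (\<lambda>x. {A x})"
  unfolding maximally_monotone_def monotone_op_def
proof (intro conjI allI impI)
  fix x y u v assume "u \<in> {A x}" "v \<in> {A y}"
  then show "0 \<le> inner (x - y) (u - v)" using mono[of x y] by simp
next
  fix x u assume H: "\<forall>y v. v \<in> {A y} \<longrightarrow> 0 \<le> inner (x - y) (u - v)"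
  have L: "0 \<le> L" using lipschitz_on_nonneg[OF lip] .
  define w where "w = A x - u"
  define t where "t = 1 / (2 * L + 2)"
  have t: "0 < t" "t * L \<le> 1 / 2" using L by (simp_all add: t_def field_simps)
  define y where "y = x - t *\<^sub>R w"
  \<comment> \<open>monotonicity against \<open>(y, A y)\<close> gives \<open>\<parallel>w\<parallel>\<^sup>2 \<le> t L \<parallel>w\<parallel>\<^sup>2\<close>, and \<open>t L < 1\<close>\<close>
  have "0 \<le> inner (x - y) (u - A y)" using H by simp
  then have "0 \<le> t * inner w (u - A y)" by (simp add: y_def)
  then have "0 \<le> inner w (u - A y)" using t by (simp add: zero_le_mult_iff)
  also have "inner w (u - A y) = inner w (A x - A y) - (norm w)\<^sup>2"
    by (simp add: w_def inner_diff_right power2_norm_eq_inner)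
  also have "inner w (A x - A y) \<le> norm w * (L * norm (x - y))"
    using norm_cauchy_schwarz[of w "A x - A y"] lipschitz_on_normD[OF lip UNIV_I UNIV_I, of x y]
    by (smt (verit) mult_left_mono norm_ge_zero)
  also have "norm w * (L * norm (x - y)) = t * L * (norm w)\<^sup>2"
    using t by (simp add: y_def power2_eq_square)
  finally have "(norm w)\<^sup>2 \<le> t * L * (norm w)\<^sup>2" by simp
  also have "\<dots> \<le> (norm w)\<^sup>2 / 2"
    using mult_right_mono[OF t(2), of "(norm w)\<^sup>2"] by simp
  finally have "w = 0" by simp
  then show "u \<in> {A x}" by (simp add: w_def)
qed

lemma maximally_monotone_id_plus_scaled_lipschitz:
  fixes g :: "'a::real_inner \<Rightarrow> 'a"
  assumes lip: "lipschitz_on L UNIV g" and t: "0 \<le> t" "t * L \<le> 1"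
  shows "maximally_monotone (\<lambda>x. {x + t *\<^sub>R g x})"
proof (rule monotone_lipschitz_imp_maximally_monotone)
  fix x y
  have "- L * (norm (x - y))\<^sup>2 \<le> inner (x - y) (g x - g y)"
    using lipschitz_on_imp_hypomonotone[OF lip] unfolding hypomonotone_def by blast
  then have "t * (- L * (norm (x - y))\<^sup>2) \<le> t * inner (x - y) (g x - g y)"
    using t(1) by (rule mult_left_mono)
  moreover have "0 \<le> (1 - t * L) * (norm (x - y))\<^sup>2"
    using t(2) by simp
  ultimately show "0 \<le> inner (x - y) (x + t *\<^sub>R g x - (y + t *\<^sub>R g y))"
    by (simp add: power2_norm_eq_inner algebra_simps)
next
  show "lipschitz_on (1 + t * L) UNIV (\<lambda>x. x + t *\<^sub>R g x)"
    by (intro lipschitz_on_add lipschitz_on_id lipschitz_on_cmult_nonneg lip t(1))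
qed

lemma Prox_eq_solutions:
  fixes f :: "'a::real_inner \<Rightarrow> real"
  assumes mu: "0 < mu"
    and grad: "\<And>x. (f has_derivative (\<lambda>h. inner (g x) h)) (at x)"
    and hypo: "hypomonotone (1 / mu) g"
  shows "Prox mu f x = {y. y + mu *\<^sub>R g y = x}"
proof -
  define \<psi> where "\<psi> = (\<lambda>y. f y + (norm (y - x))\<^sup>2 / (2 * mu))"
  define G where "G y = g y + (1 / mu) *\<^sub>R (y - x)" for y
  have der: "(\<psi> has_derivative (\<lambda>h. inner (G y) h)) (at y)" for y
    using has_derivative_add[OF grad has_derivative_mult_right[OF has_derivative_norm_diff_power2[of x y]],
        of "1 / (2 * mu)"] mu
    by (simp add: \<psi>_def G_def inner_add_left)
  have mono: "0 \<le> inner (a - b) (G a - G b)" for a b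
    using hypomonotone_imp_monotone_shift[OF hypo, of a b] by (simp add: G_def algebra_simps)
  have G_zero_iff: "G y = 0 \<longleftrightarrow> y + mu *\<^sub>R g y = x" for y
  proof -
    have "mu *\<^sub>R G y = y + mu *\<^sub>R g y - x"
      using mu by (simp add: G_def scaleR_add_right scaleR_diff_right)
    then show ?thesis using mu by (metis eq_iff_diff_eq_0 scaleR_eq_0_iff less_irrefl)
  qed
  have "y \<in> Prox mu f x \<longleftrightarrow> (\<forall>z. \<psi> y \<le> \<psi> z)" for y
    by (simp add: Prox_def \<psi>_def norm_minus_commute)
  moreover have "(\<forall>z. \<psi> y \<le> \<psi> z) \<longleftrightarrow> G y = 0" for y
  proof
    assume "\<forall>z. \<psi> y \<le> \<psi> z"
    then have "(\<lambda>h. inner (G y) h) = (\<lambda>h. 0)"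
      using differential_zero_maxmin[of y UNIV \<psi>, OF _ _ der] by auto
    then show "G y = 0" by (metis inner_eq_zero_iff)
  next
    assume "G y = 0"
    then show "\<forall>z. \<psi> y \<le> \<psi> z"
      using monotone_gradient_imp_above_tangent[OF der mono, of y] by simp
  qed
  ultimately show ?thesis using G_zero_iff by blast
qed

lemma ex1_add_scaleR_lipschitz_eq:
  fixes g :: "'a::{real_normed_vector, complete_space} \<Rightarrow> 'a"
  assumes lip: "lipschitz_on L UNIV g" and "0 \<le> mu" "mu * L < 1"
  shows "\<exists>!y. y + mu *\<^sub>R g y = x"
proof -
  have "lipschitz_on (0 + mu * L) UNIV (\<lambda>y. x - mu *\<^sub>R g y)"
    by (intro lipschitz_on_diff lipschitz_on_constant lipschitz_on_cmult_nonneg lip \<open>0 \<le> mu\<close>)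
  then have "\<exists>!y. x - mu *\<^sub>R g y = y"
    using assms lipschitz_on_nonneg[OF lip]
    by (intro banach_fix_type[of "mu * L"]) (auto dest: lipschitz_onD)
  moreover have "x - mu *\<^sub>R g y = y \<longleftrightarrow> y + mu *\<^sub>R g y = x" for y
    by (auto simp: algebra_simps)
  ultimately show ?thesis by simp
qed

lemma cocoercive_inverse_of_id_plus_hypomonotone:
  fixes g p :: "'a::real_inner \<Rightarrow> 'a"
  assumes inv: "\<And>x. p x + mu *\<^sub>R g (p x) = x"
    and hypo: "hypomonotone c g" and "0 \<le> mu"
  shows "cocoercive (1 - mu * c) p"
  unfolding cocoercive_def
proof (intro allI)
  fix x y
  define e where "e = p x - p y"
  have "x - y = e + mu *\<^sub>R (g (p x) - g (p y))"
    using inv[of x] inv[of y] by (simp add: e_def algebra_simps)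
  then have "inner (x - y) e = (norm e)\<^sup>2 + mu * inner e (g (p x) - g (p y))"
    by (simp add: inner_add_left inner_add_right power2_norm_eq_inner inner_commute)
  moreover have "- c * (norm e)\<^sup>2 \<le> inner e (g (p x) - g (p y))"
    using hypo unfolding hypomonotone_def e_def by blast
  then have "mu * (- c * (norm e)\<^sup>2) \<le> mu * inner e (g (p x) - g (p y))"
    using \<open>0 \<le> mu\<close> by (rule mult_left_mono)
  ultimately show "(1 - mu * c) * (norm (p x - p y))\<^sup>2 \<le> inner (x - y) (p x - p y)"
    by (simp add: e_def algebra_simps)
qed

lemma cocoercive_imp_conically_nonexpansive_diff:
  fixes S :: "'a::real_inner \<Rightarrow> 'a"
  assumes "0 < \<gamma>" and co: "cocoercive \<gamma> S"
  shows "conically_nonexpansive (1 / (2 * \<gamma>)) (\<lambda>x. x - S x)"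
  unfolding conically_nonexpansive_def
proof (intro conjI exI)
  define N where "N x = x - (2 * \<gamma>) *\<^sub>R S x" for x
  show "nonexpansive N"
    unfolding nonexpansive_def
  proof (intro allI)
    fix x y
    define d e where "d = x - y" and "e = S x - S y"
    have "(norm (N x - N y))\<^sup>2 = (norm d)\<^sup>2 - 4 * \<gamma> * (inner d e - \<gamma> * (norm e)\<^sup>2)"
      by (simp add: N_def d_def e_def power2_norm_eq_inner inner_commute algebra_simps)
    also have "\<dots> \<le> (norm d)\<^sup>2"
      using co \<open>0 < \<gamma>\<close> unfolding cocoercive_def d_def e_def by simp
    finally show "norm (N x - N y) \<le> norm (x - y)"
      unfolding d_def by (rule power2_le_imp_le) simp
  qed
  show "\<forall>x. x - S x = (1 - 1 / (2 * \<gamma>)) *\<^sub>R x + (1 / (2 * \<gamma>)) *\<^sub>R N x"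
    using \<open>0 < \<gamma>\<close> by (simp add: N_def algebra_simps)
qed (use \<open>0 < \<gamma>\<close> in simp)

theorem corollary6p5:
  fixes f :: "'a::{real_inner, complete_space} \<Rightarrow> real"
    and g :: "'a \<Rightarrow> 'a"
    and lam :: real
  assumes lam_pos: "0 < lam"
    and grad: "\<And>x. (f has_derivative (\<lambda>h. inner (g x) h)) (at x)"
    and lip: "lipschitz_on (1 / lam) UNIV g"
    and lower: "\<exists>a b c. 0 \<le> a \<and> (\<forall>x. f x \<ge> - a * (norm x)\<^sup>2 - b * norm x + c)"
  shows "maximally_monotone (\<lambda>x. {x + lam *\<^sub>R g x})
       \<and> hypoconvex (1 / lam) f
       \<and> convex_on UNIV (\<lambda>x. f x + (norm x)\<^sup>2 / (2 * lam))
       \<and> (\<forall>mu. 0 < mu \<and> mu < lam \<longrightarrow>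
              (\<forall>x. \<exists>!y. y \<in> Prox mu f x)
            \<and> cocoercive ((lam - mu) / lam) (prox_fun mu f)
            \<and> Prox mu f = resolvent (\<lambda>y. {mu *\<^sub>R g y})
            \<and> (\<forall>x. Prox mu f x = {y. y + mu *\<^sub>R g y = x})
            \<and> conically_nonexpansive (lam / (2 * (lam - mu))) (\<lambda>x. x - prox_fun mu f x))"
proof -
  have hypo: "hypomonotone (1 / lam) g"
    using lip by (rule lipschitz_on_imp_hypomonotone)
  note convex = hypomonotone_gradient_imp_convex_on[OF grad hypo]
  have "maximally_monotone (\<lambda>x. {x + lam *\<^sub>R g x})"
    using lam_pos by (intro maximally_monotone_id_plus_scaled_lipschitz[OF lip]) auto
  moreover have "hypoconvex (1 / lam) f"
    using convex by (rule convex_on_add_norm_power2_imp_hypoconvex)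
  moreover have "convex_on UNIV (\<lambda>x. f x + (norm x)\<^sup>2 / (2 * lam))"
    using convex by (simp add: mult.commute)
  moreover have "(\<forall>x. \<exists>!y. y \<in> Prox mu f x)
            \<and> cocoercive ((lam - mu) / lam) (prox_fun mu f)
            \<and> Prox mu f = resolvent (\<lambda>y. {mu *\<^sub>R g y})
            \<and> (\<forall>x. Prox mu f x = {y. y + mu *\<^sub>R g y = x})
            \<and> conically_nonexpansive (lam / (2 * (lam - mu))) (\<lambda>x. x - prox_fun mu f x)"
    if mu: "0 < mu" "mu < lam" for mu
  proof -
    have "hypomonotone (1 / mu) g"
      by (rule hypomonotone_mono[OF hypo]) (use mu in \<open>simp add: frac_le\<close>)
    with mu grad have Prox: "Prox mu f x = {y. y + mu *\<^sub>R g y = x}" for x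
      by (intro Prox_eq_solutions) auto
    have ex1: "\<exists>!y. y \<in> Prox mu f x" for x
      using ex1_add_scaleR_lipschitz_eq[OF lip] mu by (simp add: Prox)
    have "prox_fun mu f x + mu *\<^sub>R g (prox_fun mu f x) = x" for x
      using theI'[OF ex1[of x]] unfolding prox_fun_def Prox by simp
    from cocoercive_inverse_of_id_plus_hypomonotone[OF this hypo] mu
    have co: "cocoercive ((lam - mu) / lam) (prox_fun mu f)"
      using lam_pos by (simp add: diff_divide_distrib)
    have "conically_nonexpansive (lam / (2 * (lam - mu))) (\<lambda>x. x - prox_fun mu f x)"
      using cocoercive_imp_conically_nonexpansive_diff[OF _ co] mu by simp
    moreover have "Prox mu f = resolvent (\<lambda>y. {mu *\<^sub>R g y})"
      by (auto simp: fun_eq_iff resolvent_def Prox)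
    ultimately show ?thesis using ex1 co Prox by blast
  qed
  ultimately show ?thesis by blast
qed

end
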